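(* Let $G$ be a finite subgroup of the unit circle $S^1=\{z\in\mathbb{C}: |z|=1\}$ (under multiplication). (1) Let $\lambda\in G$. Then there do not exist sets $A,B\subseteq\mathbb{C}^*$ with $|A|\ge 2$ and $|B|\ge 2$ such that $AB=(G-\lambda)\setminus\{0\}$. (2) If $|G|\ge 3$, then for every $\xi,\mu\in\mathbb{C}^*$ and every $A\subseteq\mathbb{C}^*$, we have $A/A\neq(\xi G+\mu)\setminus\{0\}$. (3) If $|G|\ge 3$, then for every $\xi,\mu\in\mathbb{C}^*$ and every $A\subseteq\mathbb{C}^*$, we have $A/A\neq\big((\xi G\cup\{0\})+\mu\big)\setminus\{0\}$.
   Context: $\mathbb{C}^*=\mathbb{C}\setminus\{0\}$. For sets $A,B\subseteq\mathbb{C}^*$: $AB=\{ab: a\in A, b\in B\}$ and $A/A=\{a/b: a,b\in A\}$. For $S\subseteq\mathbb{C}$: $\xi S=\{\xi s: s\in S\}$, $S+\mu=\{s+\mu:s\in S\}$, $S-\lambda=\{s-\lambda: s\in S\}$. *)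

theory Defs
  imports "HOL-Analysis.Analysis"
begin

definition set_prod :: "complex set \<Rightarrow> complex set \<Rightarrow> complex set" where
  "set_prod A B = {a * b | a b. a \<in> A \<and> b \<in> B}"

definition set_quot :: "complex set \<Rightarrow> complex set" where
  "set_quot A = {a / b | a b. a \<in> A \<and> b \<in> A}"

definition finite_circle_subgroup :: "complex set \<Rightarrow> bool" where
  "finite_circle_subgroup G \<longleftrightarrow> finite G \<and> G \<noteq> {} \<and> (\<forall>z\<in>G. norm z = 1)
     \<and> (\<forall>x\<in>G. \<forall>y\<in>G. x * y \<in> G) \<and> (\<forall>x\<in>G. inverse x \<in> G)"

definition at_least_two :: "'a set \<Rightarrow> bool" where
  "at_least_two A \<longleftrightarrow> (\<exists>x\<in>A. \<exists>y\<in>A. x \<noteq> y)"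

end

theory Submission
  imports Defs
begin

text \<open>
  (1) If \<open>ab = g - \<lambda>\<close> with \<open>|g| = |\<lambda>| = 1\<close>, then \<open>\<lambda>/(ab) = 1/(g/\<lambda> - 1)\<close> has real part \<open>-1/2\<close>.
  For \<open>a\<^sub>1 \<noteq> a\<^sub>2\<close> in \<open>A\<close> and \<open>b\<^sub>1 \<noteq> b\<^sub>2\<close> in \<open>B\<close> the four numbers \<open>\<lambda>/(a\<^sub>ib\<^sub>j)\<close> then lie on one
  vertical line and satisfy \<open>p s = q r\<close>, which forces two of them to coincide.

  (2), (3) Every quotient \<open>u \<in> A/A\<close> other than \<open>\<mu>\<close> satisfies \<open>|u - \<mu>| = |\<xi>|\<close>, i.e.
  \<open>|t - s\<mu>| = |s| |\<xi>|\<close> for \<open>s, t \<in> A\<close>. Since two circles with distinct centres meet in at most two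
  points, a case analysis shows that \<open>A/A\<close> has at most three elements; being closed under
  inversion, it is \<open>{1, v, 1/v}\<close>. Its power sums must equal those of \<open>\<xi>G + \<mu>\<close> (plus \<open>\<mu>\<close> in
  case (3)), which are \<open>|G| \<mu>\<^sup>j\<close> for \<open>0 < j < |G|\<close> because the \<open>j\<close>-th power sum of \<open>G\<close> vanishes.
  With \<open>m = |G|\<close> resp. \<open>m = |G| + 1\<close>, the first two power sums give \<open>(m - 1)(v + 1/v) = m + 1\<close>,
  which is incompatible with \<open>m = 3\<close>, with the third power sum, and with \<open>\<mu> \<in> {1, v, 1/v}\<close>.
\<close>

lemma Re_inverse_sub_one:
  fixes z :: complex
  assumes "cmod z = 1" "z \<noteq> 1"
  shows "Re (1 / (z - 1)) = -1/2"
proof -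
  have unit: "(Re z)^2 + (Im z)^2 = 1" using assms(1) cmod_power2[of z] by simp
  have "Re z \<noteq> 1"
  proof
    assume "Re z = 1"
    then have "Im z = 0" using unit by simp
    then show False using \<open>Re z = 1\<close> assms(2) by (simp add: complex_eq_iff)
  qed
  have "Re (1 / (z - 1)) = (Re z - 1) / ((Re z - 1)^2 + (Im z)^2)"
    by (simp add: Re_divide power2_eq_square)
  also have "\<dots> = (Re z - 1) / (2 * (1 - Re z))"
    using unit by (simp add: power2_eq_square algebra_simps)
  also have "\<dots> = -1/2" using \<open>Re z \<noteq> 1\<close> by (simp add: field_simps)
  finally show ?thesis .
qed

lemma mult_eq_mult_on_vertical_line:
  fixes p q r s :: complex
  assumes "Re p = c" "Re q = c" "Re r = c" "Re s = c" "c \<noteq> 0" and "p * s = q * r"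
  shows "p = q \<or> p = r"
proof -
  have "Re (p * s) = Re (q * r)" "Im (p * s) = Im (q * r)" using assms(6) by auto
  then have prod: "Im p * Im s = Im q * Im r" and "c * (Im p + Im s) = c * (Im q + Im r)"
    using assms(1-4) by (auto simp: algebra_simps)
  then have sum: "Im s = Im q + Im r - Im p" using assms(5) by simp
  have "(Im p - Im q) * (Im p - Im r) = 0"
    using prod unfolding sum by (simp add: algebra_simps)
  then show ?thesis using assms(1-3) by (auto simp: complex_eq_iff)
qed

lemma set_prod_ne_shifted_circle:
  assumes G: "G \<subseteq> sphere 0 1" and l: "cmod l = 1"
    and A: "A \<subseteq> - {0}" "at_least_two A" and B: "B \<subseteq> - {0}" "at_least_two B"
  shows "set_prod A B \<noteq> (\<lambda>g. g - l) ` G - {0}"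
proof
  assume AB: "set_prod A B = (\<lambda>g. g - l) ` G - {0}"
  have l0: "l \<noteq> 0" using l by auto
  have Re_quot: "Re (l / (a * b)) = -1/2" if "a \<in> A" "b \<in> B" for a b
  proof -
    have "a * b \<in> (\<lambda>g. g - l) ` G - {0}"
      unfolding AB[symmetric] using that by (auto simp: set_prod_def)
    then obtain g where g: "g \<in> G" "a * b = g - l" "a * b \<noteq> 0" by blast
    have "cmod (g / l) = 1" using G g(1) l by (auto simp: norm_divide)
    moreover have "g / l \<noteq> 1" using g(2,3) l0 by auto
    moreover have "1 / (g / l - 1) = l / (a * b)" using g(2,3) l0 by (simp add: field_simps)
    ultimately show ?thesis using Re_inverse_sub_one by metis
  qed
  obtain a1 a2 where a: "a1 \<in> A" "a2 \<in> A" "a1 \<noteq> a2" using A(2) by (auto simp: at_least_two_def)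
  obtain b1 b2 where b: "b1 \<in> B" "b2 \<in> B" "b1 \<noteq> b2" using B(2) by (auto simp: at_least_two_def)
  have nz: "a1 \<noteq> 0" "a2 \<noteq> 0" "b1 \<noteq> 0" "b2 \<noteq> 0" using a b A(1) B(1) by auto
  have "l / (a1 * b1) * (l / (a2 * b2)) = l / (a1 * b2) * (l / (a2 * b1))"
    using nz by (simp add: field_simps)
  then have "l / (a1 * b1) = l / (a1 * b2) \<or> l / (a1 * b1) = l / (a2 * b1)"
    using Re_quot a b by (intro mult_eq_mult_on_vertical_line[where c = "-1/2" and s = "l / (a2 * b2)"]) auto
  then show False using nz l0 a b by auto
qed

lemma ex_subset_doubleton_if_no_three_distinct:
  assumes "\<And>x y z. x \<in> S \<Longrightarrow> y \<in> S \<Longrightarrow> z \<in> S \<Longrightarrow> x = y \<or> x = z \<or> y = z"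
  shows "\<exists>a b. S \<subseteq> {a, b}"
proof (cases "S = {}")
  case False
  then obtain a where a: "a \<in> S" by blast
  show ?thesis
  proof (cases "S \<subseteq> {a}")
    case False
    then obtain b where "b \<in> S" "b \<noteq> a" by blast
    then have "S \<subseteq> {a, b}" using assms a by blast
    then show ?thesis by blast
  qed blast
qed blast

lemma circles_0_1_common_points:
  fixes p q w :: complex
  assumes "cmod p = r1" "cmod q = r1" "cmod w = r1"
    and "cmod (p - 1) = r2" "cmod (q - 1) = r2" "cmod (w - 1) = r2"
  shows "p = q \<or> p = w \<or> q = w"
proof -
  have coords: "Re z = (r1^2 - r2^2 + 1) / 2 \<and> (Im z)^2 = r1^2 - ((r1^2 - r2^2 + 1) / 2)^2"
    if "cmod z = r1" "cmod (z - 1) = r2" for z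
  proof -
    have a: "r1^2 = (Re z)^2 + (Im z)^2" using that cmod_power2[of z] by simp
    have b: "r2^2 = (Re z - 1)^2 + (Im z)^2" using that cmod_power2[of "z - 1"] by simp
    have re: "Re z = (r1^2 - r2^2 + 1) / 2" using a b by (simp add: power2_eq_square algebra_simps)
    have im: "(Im z)^2 = r1^2 - (Re z)^2" using a by simp
    show ?thesis unfolding im re by simp
  qed
  have "Re p = Re q" "Re p = Re w" "(Im p)^2 = (Im q)^2" "(Im p)^2 = (Im w)^2"
    using coords assms by metis+
  moreover have "Im p = Im q \<or> Im p = Im w \<or> Im q = Im w"
    using calculation(3,4) by (metis power2_eq_iff)
  ultimately show ?thesis by (auto simp: complex_eq_iff)
qed

lemma circles_common_points:
  fixes x y z c1 c2 :: complex
  assumes "c1 \<noteq> c2"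
    and "cmod (x - c1) = r1" "cmod (y - c1) = r1" "cmod (z - c1) = r1"
    and "cmod (x - c2) = r2" "cmod (y - c2) = r2" "cmod (z - c2) = r2"
  shows "x = y \<or> x = z \<or> y = z"
proof -
  define d where "d = c2 - c1"
  have d: "d \<noteq> 0" using assms(1) by (simp add: d_def)
  define f where "f t = (t - c1) / d" for t
  have "f t - 1 = (t - c2) / d" for t using d by (simp add: f_def d_def field_simps)
  then have "f x = f y \<or> f x = f z \<or> f y = f z"
    using assms by (intro circles_0_1_common_points[of _ "r1 / cmod d" _ _ "r2 / cmod d"])
      (auto simp: f_def norm_divide)
  then show ?thesis using d by (auto simp: f_def)
qed

lemma norm_inverse_add_one_ne_two:
  fixes v :: complex
  assumes "cmod (v + 1) = 2" "cmod (v - 1) = 2"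
  shows "cmod (1 / v + 1) \<noteq> 2"
proof -
  have a: "(Re v + 1)^2 + (Im v)^2 = 4" using assms(1) cmod_power2[of "v + 1"] by simp
  have b: "(Re v - 1)^2 + (Im v)^2 = 4" using assms(2) cmod_power2[of "v - 1"] by simp
  have re: "Re v = 0" using a b by (simp add: power2_eq_square algebra_simps)
  then have im: "(Im v)^2 = 3" using a by simp
  have "Re (1 / v) = 0" using re by (simp add: Re_divide)
  moreover have "(Im (1 / v))^2 = 1/3"
  proof -
    have "Im (1 / v) = - Im v / 3" using re im by (simp add: Im_divide)
    then show ?thesis using im by (simp add: power2_eq_square)
  qed
  ultimately have "(cmod (1 / v + 1))^2 = 4/3" unfolding cmod_power2 by simp
  then show ?thesis by auto
qed

lemma primitive_cube_root_of_unity_if_equidistant: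
  fixes m :: complex
  assumes "cmod m = 1" "m \<noteq> 1" "cmod (1 / m - m) = cmod (1 - m)"
  shows "m^2 + m + 1 = 0"
proof -
  have unit: "(Re m)^2 + (Im m)^2 = 1" using assms(1) cmod_power2[of m] by simp
  have "1 / m = cnj m" using complex_div_cnj[of 1 m] assms(1) by simp
  then have "(2 * Im m)^2 = (1 - Re m)^2 + (Im m)^2"
    using arg_cong[OF assms(3), of "\<lambda>t. t^2"] unfolding cmod_power2 by (simp add: power2_eq_square)
  then have "(1 - Re m) * (2 + 4 * Re m) = 0" using unit by (simp add: power2_eq_square algebra_simps)
  moreover have "Re m \<noteq> 1"
  proof
    assume "Re m = 1"
    then have "Im m = 0" using unit by simp
    then show False using \<open>Re m = 1\<close> assms(2) by (simp add: complex_eq_iff)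
  qed
  ultimately have re: "Re m = -1/2" by simp
  then have "(Im m)^2 = 3/4" using unit by (simp add: power2_eq_square)
  then show ?thesis using re by (simp add: complex_eq_iff power2_eq_square algebra_simps)
qed

lemma in_set_quot: "a \<in> A \<Longrightarrow> b \<in> A \<Longrightarrow> a / b \<in> set_quot A"
  by (auto simp: set_quot_def)

lemma inverse_in_set_quot:
  assumes "u \<in> set_quot A"
  shows "1 / u \<in> set_quot A"
proof -
  obtain a b where "a \<in> A" "b \<in> A" "u = a / b" using assms by (auto simp: set_quot_def)
  then show ?thesis using in_set_quot[of b A a] by simp
qed

lemma one_in_set_quot: "A \<subseteq> - {0} \<Longrightarrow> a \<in> A \<Longrightarrow> 1 \<in> set_quot A"
  using in_set_quot[of a A a] by (cases "a = 0") auto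

lemma zero_notin_set_quot: "A \<subseteq> - {0} \<Longrightarrow> 0 \<notin> set_quot A"
  by (auto simp: set_quot_def)

lemma set_quot_subset_of_subset_doubleton:
  assumes "A \<subseteq> - {0}" "A \<subseteq> {x, y}"
  shows "set_quot A \<subseteq> {1, x / y, y / x}"
proof
  fix u assume "u \<in> set_quot A"
  then obtain a b where "a \<in> A" "b \<in> A" "u = a / b" by (auto simp: set_quot_def)
  then show "u \<in> {1, x / y, y / x}" using assms by auto
qed

lemma set_quot_eq_inverse_triple:
  assumes "A \<subseteq> - {0}" "A \<noteq> {}" "set_quot A \<subseteq> {1, x, y}"
  shows "\<exists>v. v \<noteq> 0 \<and> set_quot A = {1, v, 1 / v}"
proof (cases "set_quot A \<subseteq> {1}")
  case True
  then show ?thesis using assms(1,2) one_in_set_quot by (intro exI[of _ 1]) auto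
next
  case False
  then obtain u where u: "u \<in> set_quot A" "u \<noteq> 1" by blast
  have u0: "u \<noteq> 0" using u zero_notin_set_quot[OF assms(1)] by auto
  have sub: "{1, u, 1 / u} \<subseteq> set_quot A"
    using u inverse_in_set_quot one_in_set_quot assms(1,2) by blast
  have no_three: False if "a \<in> set_quot A - {1}" "b \<in> set_quot A - {1}" "c \<in> set_quot A - {1}"
    "a \<noteq> b" "a \<noteq> c" "b \<noteq> c" for a b c
    using that assms(3) by auto
  have "w \<in> {1, u, 1 / u}" if w: "w \<in> set_quot A" for w
  proof (rule ccontr)
    assume nw: "w \<notin> {1, u, 1 / u}"
    have w0: "w \<noteq> 0" using w zero_notin_set_quot[OF assms(1)] by auto
    then have "1 / w \<notin> {1, u, 1 / u}" using nw u0 by (auto simp: field_simps)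
    moreover have "1 / w \<in> set_quot A" using inverse_in_set_quot[OF w] .
    moreover have "u \<noteq> 1 / u \<or> w \<noteq> 1 / w"
    proof (rule ccontr)
      assume "\<not> ?thesis"
      then have "u^2 = 1" "w^2 = 1" using u0 w0 by (auto simp: field_simps power2_eq_square)
      then show False using u(2) nw by (auto simp: power2_eq_1_iff)
    qed
    ultimately show False
      using no_three[of u "1 / u" w] no_three[of u w "1 / w"] sub w nw u(2) by auto
  qed
  then show ?thesis using sub u0 by blast
qed

locale quotient_set_on_circle =
  fixes A :: "complex set" and \<mu> :: complex and r :: real
  assumes nonzero: "A \<subseteq> - {0}" and center_nonzero: "\<mu> \<noteq> 0"
    and on_circle: "\<And>u. u \<in> set_quot A \<Longrightarrow> u \<noteq> \<mu> \<Longrightarrow> cmod (u - \<mu>) = r"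
begin

lemma elem_nonzero: "a \<in> A \<Longrightarrow> a \<noteq> 0"
  using nonzero by auto

lemma radius_eq_dist_one: "a \<in> A \<Longrightarrow> \<mu> \<noteq> 1 \<Longrightarrow> r = cmod (1 - \<mu>)"
  using on_circle[OF one_in_set_quot[OF nonzero]] by metis

lemma norm_diff_rotation:
  assumes "s \<in> A" "t \<in> A" "t \<noteq> s * \<mu>"
  shows "cmod (t - s * \<mu>) = cmod s * r"
proof -
  have s0: "s \<noteq> 0" using elem_nonzero assms(1) .
  have "t / s \<noteq> \<mu>" using assms(3) s0 by (auto simp: field_simps)
  then have "cmod (t / s - \<mu>) = r" using on_circle in_set_quot[OF assms(2,1)] by blast
  moreover have "t - s * \<mu> = s * (t / s - \<mu>)" using s0 by (simp add: field_simps)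
  ultimately show ?thesis by (simp add: norm_mult)
qed

text \<open>The points of \<open>A\<close> other than \<open>p \<mu>\<close> and \<open>q \<mu>\<close> lie on the circles of radii \<open>|p| r\<close>
  and \<open>|q| r\<close> around these two centres.\<close>
lemma rotations_meet_triple:
  assumes "p \<in> A" "q \<in> A" "p \<noteq> q" "x \<in> A" "y \<in> A" "z \<in> A" "x \<noteq> y" "x \<noteq> z" "y \<noteq> z"
  shows "{x, y, z} \<inter> {p * \<mu>, q * \<mu>} \<noteq> {}"
proof
  assume "{x, y, z} \<inter> {p * \<mu>, q * \<mu>} = {}"
  moreover have "p * \<mu> \<noteq> q * \<mu>" using assms(3) center_nonzero by simp
  ultimately have "x = y \<or> x = z \<or> y = z"
    using assms norm_diff_rotation
    by (intro circles_common_points[of "p * \<mu>" "q * \<mu>" _ "cmod p * r" _ _ "cmod q * r"]) auto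
  then show False using assms by blast
qed

lemma set_quot_subset_three_if_center_one:
  assumes "\<mu> = 1"
  shows "\<exists>x y. set_quot A \<subseteq> {1, x, y}"
proof -
  have same_norm: "cmod a = cmod b" if "a \<in> A" "b \<in> A" for a b
  proof (cases "a = b")
    case False
    have "cmod (a - b) = cmod b * r" "cmod (b - a) = cmod a * r"
      using norm_diff_rotation that False assms by auto
    moreover have "cmod (a - b) \<noteq> 0" using False by simp
    ultimately show ?thesis by (auto simp: norm_minus_commute)
  qed simp
  have "cmod u = 1" if u: "u \<in> set_quot A" for u
  proof -
    obtain a b where "a \<in> A" "b \<in> A" "u = a / b" using u by (auto simp: set_quot_def)
    then show ?thesis using same_norm[of a b] elem_nonzero[of b] by (simp add: norm_divide)
  qed
  then have "x = y \<or> x = z \<or> y = z" if "x \<in> set_quot A - {1}" "y \<in> set_quot A - {1}"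
    "z \<in> set_quot A - {1}" for x y z
    using that on_circle assms by (intro circles_common_points[of 0 1 _ 1 _ _ r]) auto
  then obtain x y where "set_quot A - {1} \<subseteq> {x, y}"
    using ex_subset_doubleton_if_no_three_distinct by meson
  then show ?thesis by blast
qed

lemma no_antipodal_triple:
  assumes "\<mu> = -1" "p \<in> A" "- p \<in> A" "w \<in> A" "w \<noteq> p" "w \<noteq> - p"
  shows False
proof -
  have p0: "p \<noteq> 0" and w0: "w \<noteq> 0" using elem_nonzero assms by auto
  have r: "r = 2" using radius_eq_dist_one[OF assms(2)] assms(1) by simp
  define v where "v = w / p"
  have "v \<in> set_quot A" "- v \<in> set_quot A" "1 / v \<in> set_quot A"
    using in_set_quot[OF assms(4,2)] in_set_quot[OF assms(4,3)] in_set_quot[OF assms(2,4)]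
    by (simp_all add: v_def)
  moreover have "v \<noteq> -1" "- v \<noteq> -1" "1 / v \<noteq> -1"
    using assms(5,6) p0 w0 by (auto simp: v_def field_simps)
  ultimately have "cmod (v + 1) = 2" "cmod (- v + 1) = 2" "cmod (1 / v + 1) = 2"
    using on_circle assms(1) r by fastforce+
  moreover have "cmod (- v + 1) = cmod (v - 1)" by (simp add: norm_minus_commute)
  ultimately show False using norm_inverse_add_one_ne_two by simp
qed

lemma cube_root_of_unity_if_orbit:
  assumes "\<mu> \<noteq> 1" "x \<in> A" "x * \<mu> \<in> A" "x * \<mu>^2 \<in> A" "x * \<mu>^2 \<noteq> x"
  shows "\<mu>^3 = 1"
proof -
  have x0: "x \<noteq> 0" using elem_nonzero assms(2) .
  have r: "r = cmod (1 - \<mu>)" using radius_eq_dist_one[OF assms(2,1)] .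
  have "\<mu>^2 \<in> set_quot A" using in_set_quot[OF assms(4,2)] x0 by simp
  moreover have "\<mu>^2 \<noteq> \<mu>" using center_nonzero assms(1) by (simp add: power2_eq_square)
  ultimately have "cmod (\<mu>^2 - \<mu>) = cmod (1 - \<mu>)" using on_circle r by blast
  moreover have "\<mu>^2 - \<mu> = \<mu> * (\<mu> - 1)" by (simp add: power2_eq_square algebra_simps)
  ultimately have unit: "cmod \<mu> = 1"
    using assms(1) by (simp add: norm_mult norm_minus_commute)
  have "1 / \<mu> \<in> set_quot A" using in_set_quot[OF assms(2,3)] x0 by simp
  moreover have "1 / \<mu> \<noteq> \<mu>"
  proof
    assume "1 / \<mu> = \<mu>"
    then have "\<mu>^2 = 1" using center_nonzero by (simp add: field_simps power2_eq_square)
    then show False using assms(5) by simp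
  qed
  ultimately have "cmod (1 / \<mu> - \<mu>) = cmod (1 - \<mu>)" using on_circle r by blast
  then have "\<mu>^2 + \<mu> + 1 = 0" using primitive_cube_root_of_unity_if_equidistant unit assms(1) by blast
  moreover have "\<mu>^3 - 1 = (\<mu> - 1) * (\<mu>^2 + \<mu> + 1)"
    by (simp add: power2_eq_square power3_eq_cube algebra_simps)
  ultimately show ?thesis by simp
qed

lemma subset_orbit_if_cube_root_of_unity:
  assumes "\<mu>^3 = 1" "\<mu> \<noteq> 1" "x \<in> A" "x * \<mu>^2 \<in> A" "x * \<mu>^2 \<noteq> x"
  shows "A \<subseteq> {x, x * \<mu>, x * \<mu>^2}"
proof
  fix d assume d: "d \<in> A"
  show "d \<in> {x, x * \<mu>, x * \<mu>^2}"
  proof (rule ccontr)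
    assume nd: "d \<notin> {x, x * \<mu>, x * \<mu>^2}"
    have "{x, x * \<mu>^2, d} \<inter> {x * \<mu>, d * \<mu>} \<noteq> {}"
      using rotations_meet_triple[of x d x "x * \<mu>^2" d] assms d nd by auto
    moreover have "x * \<mu>^2 \<noteq> x * \<mu>" "x \<noteq> x * \<mu>" "d \<noteq> d * \<mu>"
      using assms(2) elem_nonzero[OF assms(3)] elem_nonzero[OF d] center_nonzero
      by (auto simp: power2_eq_square)
    moreover have "x \<noteq> d * \<mu>"
    proof
      assume "x = d * \<mu>"
      then have "x * \<mu>^2 = d * \<mu>^3" by (simp add: power2_eq_square power3_eq_cube mult.assoc)
      then show False using nd assms(1) by simp
    qed
    moreover have "x * \<mu>^2 \<noteq> d * \<mu>"
      using nd center_nonzero by (auto simp: power2_eq_square)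
    ultimately show False using nd by auto
  qed
qed

lemma set_quot_subset_orbit:
  assumes "\<mu> \<noteq> 1" "x \<in> A" "x * \<mu> \<in> A" "x * \<mu>^2 \<in> A" "x * \<mu>^2 \<noteq> x"
  shows "set_quot A \<subseteq> {1, \<mu>, \<mu>^2}"
proof
  have cube: "\<mu>^3 = 1" using cube_root_of_unity_if_orbit assms .
  have "1 / \<mu> = \<mu>^2" "1 / \<mu>^2 = \<mu>"
    using cube center_nonzero by (simp_all add: field_simps power2_eq_square power3_eq_cube)
  then have orbit_div: "\<alpha> / \<beta> \<in> {1, \<mu>, \<mu>^2}" if "\<alpha> \<in> {1, \<mu>, \<mu>^2}" "\<beta> \<in> {1, \<mu>, \<mu>^2}" for \<alpha> \<beta>
    using that cube center_nonzero by (auto simp: power2_eq_square power3_eq_cube field_simps)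
  fix u assume "u \<in> set_quot A"
  then obtain a b where ab: "a \<in> A" "b \<in> A" "u = a / b" by (auto simp: set_quot_def)
  moreover have "\<exists>\<alpha>\<in>{1, \<mu>, \<mu>^2}. c = x * \<alpha>" if "c \<in> A" for c
    using subset_orbit_if_cube_root_of_unity[OF cube assms(1,2,4,5)] that by auto
  ultimately obtain \<alpha> \<beta> where "\<alpha> \<in> {1, \<mu>, \<mu>^2}" "\<beta> \<in> {1, \<mu>, \<mu>^2}" "a = x * \<alpha>" "b = x * \<beta>"
    by meson
  then show "u \<in> {1, \<mu>, \<mu>^2}" using orbit_div ab(3) elem_nonzero[OF assms(2)] by simp
qed

lemma set_quot_subset_of_rotations:
  assumes "\<mu> \<noteq> 1" "p \<in> A" "q \<in> A" "w \<in> A" "p \<noteq> q" "p \<noteq> w" "q \<noteq> w"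
    and "p * \<mu> \<in> {p, q, w}" "q * \<mu> \<in> {p, q, w}"
  shows "set_quot A \<subseteq> {1, \<mu>, \<mu>^2}"
proof -
  have p0: "p \<noteq> 0" and "q \<noteq> 0" using elem_nonzero assms(2,3) by auto
  then have "p * \<mu> \<noteq> p" "q * \<mu> \<noteq> q" "p * \<mu> \<noteq> q * \<mu>"
    using assms(1,5) center_nonzero by auto
  then consider "p * \<mu> = q" "q * \<mu> = p" | "p * \<mu> = q" "q * \<mu> = w" | "p * \<mu> = w" "q * \<mu> = p"
    using assms(8,9) by auto
  then show ?thesis
  proof cases
    case 1
    then have "p * \<mu>^2 = p" by (simp add: power2_eq_square mult.assoc[symmetric])
    then have "\<mu>^2 = 1" using p0 by simp
    then have "\<mu> = -1" using assms(1) by (simp add: power2_eq_1_iff)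
    then show ?thesis using no_antipodal_triple[of p w] 1 assms by auto
  next
    case 2
    then have "p * \<mu>^2 = w" by (simp add: power2_eq_square mult.assoc[symmetric])
    then show ?thesis using set_quot_subset_orbit[of p] 2 assms by simp
  next
    case 3
    then have "q * \<mu>^2 = w" by (simp add: power2_eq_square mult.assoc[symmetric])
    then show ?thesis using set_quot_subset_orbit[of q] 3 assms by simp
  qed
qed

lemma set_quot_subset_three: "\<exists>x y. set_quot A \<subseteq> {1, x, y}"
proof (cases "\<mu> = 1")
  case True
  then show ?thesis using set_quot_subset_three_if_center_one by blast
next
  case \<mu>1: False
  show ?thesis
  proof (cases "\<exists>a\<in>A. \<exists>b\<in>A. \<exists>c\<in>A. a \<noteq> b \<and> a \<noteq> c \<and> b \<noteq> c")
    case True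
    then obtain a b c where abc: "a \<in> A" "b \<in> A" "c \<in> A" "a \<noteq> b" "a \<noteq> c" "b \<noteq> c"
      by blast
    define T where "T = {a, b, c}"
    have "p * \<mu> \<in> T \<or> q * \<mu> \<in> T" if "p \<in> T" "q \<in> T" "p \<noteq> q" for p q
      using rotations_meet_triple[of p q a b c] that abc by (auto simp: T_def)
    then have "a * \<mu> \<in> T \<and> b * \<mu> \<in> T \<or> a * \<mu> \<in> T \<and> c * \<mu> \<in> T \<or> b * \<mu> \<in> T \<and> c * \<mu> \<in> T"
      using abc unfolding T_def by blast
    moreover have "T = {a, b, c}" "T = {a, c, b}" "T = {b, c, a}" by (auto simp: T_def)
    ultimately have "set_quot A \<subseteq> {1, \<mu>, \<mu>^2}"
      using set_quot_subset_of_rotations[OF \<mu>1] abc by metis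
    then show ?thesis by blast
  next
    case False
    then obtain x y where "A \<subseteq> {x, y}"
      using ex_subset_doubleton_if_no_three_distinct[of A] by blast
    then show ?thesis using set_quot_subset_of_subset_doubleton nonzero by blast
  qed
qed

end

lemma sum_power_finite_circle_subgroup:
  assumes G: "finite_circle_subgroup G" and j: "0 < j" "j < card G"
  shows "(\<Sum>g\<in>G. g^j) = 0"
proof -
  obtain h where h: "h \<in> G" "h^j \<noteq> 1"
  proof (rule ccontr)
    assume "\<not> thesis"
    with that have "G \<subseteq> {z. z^j = 1}" by blast
    then have "card G \<le> card {z :: complex. z^j = 1}"
      using finite_roots_unity j(1) by (intro card_mono) auto
    also have "\<dots> \<le> j" by (rule card_roots_unity) (use j(1) in linarith)
    finally show False using j(2) by simp
  qed
  have h0: "h \<noteq> 0" using h(1) G by (auto simp: finite_circle_subgroup_def)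
  have "bij_betw (\<lambda>g. h * g) G G"
  proof (rule bij_betwI[where g = "\<lambda>g. inverse h * g"])
    show "(\<lambda>g. h * g) \<in> G \<rightarrow> G" "(\<lambda>g. inverse h * g) \<in> G \<rightarrow> G"
      using G h(1) by (auto simp: finite_circle_subgroup_def)
  qed (use h0 in \<open>auto simp: field_simps\<close>)
  then have "(\<Sum>g\<in>G. (h * g)^j) = (\<Sum>g\<in>G. g^j)" by (rule sum.reindex_bij_betw)
  then have "h^j * (\<Sum>g\<in>G. g^j) = 1 * (\<Sum>g\<in>G. g^j)"
    by (simp add: power_mult_distrib sum_distrib_left)
  then show ?thesis using h(2) by (metis mult_cancel_right)
qed

lemma sum_affine_power_finite_circle_subgroup:
  assumes G: "finite_circle_subgroup G" and j: "j < card G"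
  shows "(\<Sum>g\<in>G. (\<xi> * g + \<mu>)^j) = of_nat (card G) * \<mu>^j"
proof -
  have "(\<Sum>g\<in>G. (\<xi> * g + \<mu>)^j)
      = (\<Sum>g\<in>G. \<Sum>k\<le>j. of_nat (j choose k) * \<xi>^k * \<mu>^(j - k) * g^k)"
    by (simp add: binomial_ring power_mult_distrib mult_ac)
  also have "\<dots> = (\<Sum>k\<le>j. of_nat (j choose k) * \<xi>^k * \<mu>^(j - k) * (\<Sum>g\<in>G. g^k))"
    by (simp add: sum.swap[of _ G] sum_distrib_left)
  also have "\<dots> = (\<Sum>k\<le>j. if k = 0 then of_nat (card G) * \<mu>^j else 0)"
    using sum_power_finite_circle_subgroup[OF G] j by (intro sum.cong) auto
  finally show ?thesis by simp
qed

lemma sum_power_inverse_triple: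
  fixes v :: complex
  assumes "v \<noteq> 0" "v \<noteq> 1" "v \<noteq> -1"
  shows "(\<Sum>u\<in>{1, v, 1 / v}. u^j) = 1 + v^j + (1 / v)^j"
proof -
  have "1 / v \<noteq> 1" "1 / v \<noteq> v"
    using assms by (auto simp: field_simps power2_eq_square[symmetric] power2_eq_1_iff)
  then show ?thesis using assms(2) by (simp add: add.assoc)
qed

lemma inverse_triple_moment_relation:
  fixes v \<mu> :: complex and m :: nat
  assumes v0: "v \<noteq> 0" and \<mu>0: "\<mu> \<noteq> 0" and m: "m \<ge> 3"
    and p1: "(\<Sum>u\<in>{1, v, 1 / v}. u) = of_nat m * \<mu>"
    and p2: "(\<Sum>u\<in>{1, v, 1 / v}. u^2) = of_nat m * \<mu>^2"
  shows "v \<noteq> 1" "v \<noteq> -1" "m \<ge> 4" "(of_nat m - 1) * (v + 1 / v) = of_nat m + 1"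
proof -
  define M where "M = (of_nat m :: complex)"
  have M: "M \<noteq> 0" "M \<noteq> 1" using m by (auto simp: M_def)
  show v1: "v \<noteq> 1"
  proof
    assume "v = 1"
    then have "M * \<mu> = 1" "M * (\<mu> * \<mu>) = 1" using p1 p2 by (simp_all add: M_def power2_eq_square)
    then have "\<mu> = 1" by (metis mult.assoc mult_1)
    then show False using \<open>M * \<mu> = 1\<close> M(2) by simp
  qed
  show vm1: "v \<noteq> -1"
  proof
    assume "v = -1"
    then have "M * \<mu> = 0" using p1 by (simp add: M_def)
    then show False using M(1) \<mu>0 by simp
  qed
  define s where "s = v + 1 / v"
  have e1: "1 + s = M * \<mu>"
    using p1 sum_power_inverse_triple[OF v0 v1 vm1, of 1] by (simp add: M_def s_def add.assoc)
  have e2: "s^2 - 1 = M * \<mu>^2"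
    using p2 sum_power_inverse_triple[OF v0 v1 vm1, of 2] v0
    by (simp add: M_def s_def field_simps power2_eq_square)
  have "(1 + s)^2 = M * (s^2 - 1)" using e1 e2 by (simp add: power_mult_distrib power2_eq_square)
  then have "(s + 1) * ((M - 1) * s - (M + 1)) = 0" by (simp add: algebra_simps power2_eq_square)
  moreover have "s + 1 \<noteq> 0" using e1 M(1) \<mu>0 by (simp add: add.commute)
  ultimately have rel: "(M - 1) * s = M + 1" by simp
  then show "(of_nat m - 1) * (v + 1 / v) = of_nat m + 1" by (simp add: M_def s_def)
  show "m \<ge> 4"
  proof (rule ccontr)
    assume "\<not> m \<ge> 4"
    then have "m = 3" using m by simp
    then have "M = 3" by (simp add: M_def)
    then have "s = 2" using rel by simp
    then have "(v - 1)^2 = 0" using v0 by (simp add: s_def field_simps power2_eq_square)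
    then show False using v1 by simp
  qed
qed

lemma inverse_triple_center_impossible:
  fixes v \<mu> :: complex and m :: nat
  assumes v: "v \<noteq> 0" "v \<noteq> 1" "v \<noteq> -1" and \<mu>0: "\<mu> \<noteq> 0" and m: "m \<ge> 4"
    and p1: "(\<Sum>u\<in>{1, v, 1 / v}. u) = of_nat m * \<mu>"
    and rel: "(of_nat m - 1) * (v + 1 / v) = of_nat m + 1"
    and center: "\<mu> \<in> {1, v, 1 / v}"
  shows False
proof -
  define M where "M = (of_nat m :: complex)"
  define s where "s = v + 1 / v"
  have "Re M = real m" by (simp add: M_def)
  then have M: "M \<noteq> 0" "M \<noteq> 3" using m by auto
  have e1: "1 + s = M * \<mu>"
    using p1 sum_power_inverse_triple[OF v, of 1] by (simp add: M_def s_def add.assoc)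
  have rel': "(M - 1) * s = M + 1" using rel by (simp add: M_def s_def)
  have "\<mu> = 1"
  proof (rule ccontr)
    assume "\<mu> \<noteq> 1"
    then have "s = \<mu> + 1 / \<mu>" using center v(1) by (auto simp: s_def)
    then have "1 + \<mu> + 1 / \<mu> = M * \<mu>" "(M - 1) * (\<mu> + 1 / \<mu>) = M + 1"
      using e1 rel' by (simp_all add: add.assoc)
    then have "\<mu> * \<mu> + \<mu> + 1 = M * \<mu> * \<mu>" "(M - 1) * (\<mu> * \<mu> + 1) = (M + 1) * \<mu>"
      using \<mu>0 by (simp_all add: field_simps)
    then have "M * \<mu> = M" by algebra
    then show False using M(1) \<open>\<mu> \<noteq> 1\<close> by simp
  qed
  then have "(M - 1) * (M - 1) = M + 1" using e1 rel' by (metis add_diff_cancel_left' mult.right_neutral)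
  then have "M * (M - 3) = 0" by (simp add: algebra_simps)
  then show False using M by simp
qed

lemma inverse_triple_cubic_impossible:
  fixes v \<mu> :: complex and m :: nat
  assumes v: "v \<noteq> 0" "v \<noteq> 1" "v \<noteq> -1" and m: "m \<ge> 4"
    and p1: "(\<Sum>u\<in>{1, v, 1 / v}. u) = of_nat m * \<mu>"
    and p3: "(\<Sum>u\<in>{1, v, 1 / v}. u^3) = of_nat m * \<mu>^3"
    and rel: "(of_nat m - 1) * (v + 1 / v) = of_nat m + 1"
  shows False
proof -
  define M where "M = (of_nat m :: complex)"
  define s where "s = v + 1 / v"
  have "Re M = real m" by (simp add: M_def)
  then have M: "M \<noteq> 0" "M \<noteq> 3" "M \<noteq> 1" "M \<noteq> -1" using m by auto
  have e1: "1 + s = M * \<mu>"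
    using p1 sum_power_inverse_triple[OF v, of 1] by (simp add: M_def s_def add.assoc)
  have "1 + s^3 - 3 * s = 1 + (s^3 - 3 * s)" by simp
  also have "s^3 - 3 * s = v^3 + (1 / v)^3"
    using v(1) by (simp add: s_def field_simps power3_eq_cube)
  also have "1 + (v^3 + (1 / v)^3) = M * \<mu>^3"
    using p3 sum_power_inverse_triple[OF v, of 3] by (simp add: M_def add.assoc)
  finally have e3: "1 + s^3 - 3 * s = M * \<mu>^3" .
  have rel': "(M - 1) * s = M + 1" using rel by (simp add: M_def s_def)
  have "M^2 * (1 + s^3 - 3 * s) = (1 + s)^3" using e1 e3
    by (simp add: power_mult_distrib power3_eq_cube power2_eq_square)
  then have "M^2 * (M - 3) * (M^2 - 1) = 0" using rel' by algebra
  then show False using M by (auto simp: power2_eq_square square_eq_1_iff)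
qed

lemma set_quot_ne_affine_circle_subgroup:
  assumes G: "finite_circle_subgroup G" "card G \<ge> 3"
    and \<xi>: "\<xi> \<noteq> 0" and \<mu>: "\<mu> \<noteq> 0" and A: "A \<subseteq> - {0}"
  shows "set_quot A \<noteq> (\<lambda>g. \<xi> * g + \<mu>) ` G - {0}"
proof
  assume U: "set_quot A = (\<lambda>g. \<xi> * g + \<mu>) ` G - {0}"
  have fin: "finite G" using G(1) by (simp add: finite_circle_subgroup_def)
  have inj: "inj_on (\<lambda>g. \<xi> * g + \<mu>) G" using \<xi> by (auto simp: inj_on_def)
  interpret quotient_set_on_circle A \<mu> "cmod \<xi>"
    using A \<mu> G(1) by unfold_locales (auto simp: U finite_circle_subgroup_def norm_mult)
  have "A \<noteq> {}"
  proof
    assume "A = {}"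
    then have "(\<lambda>g. \<xi> * g + \<mu>) ` G \<subseteq> {0}" using U by (auto simp: set_quot_def)
    then have "card ((\<lambda>g. \<xi> * g + \<mu>) ` G) \<le> card {0 :: complex}" by (intro card_mono) auto
    then show False using card_image[OF inj] G(2) by simp
  qed
  then obtain v where v: "v \<noteq> 0" "set_quot A = {1, v, 1 / v}"
    using set_quot_subset_three set_quot_eq_inverse_triple[OF A] by meson
  have p: "(\<Sum>u\<in>{1, v, 1 / v}. u^j) = of_nat (card G) * \<mu>^j" if "0 < j" "j < card G" for j
  proof -
    have "(\<Sum>u\<in>{1, v, 1 / v}. u^j) = (\<Sum>u\<in>(\<lambda>g. \<xi> * g + \<mu>) ` G. u^j)"
      unfolding v(2)[symmetric] U using fin that(1) by (intro sum.mono_neutral_left) auto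
    also have "\<dots> = (\<Sum>g\<in>G. (\<xi> * g + \<mu>)^j)" using inj by (simp add: sum.reindex)
    finally show ?thesis using sum_affine_power_finite_circle_subgroup[OF G(1) that(2)] by simp
  qed
  have p1: "(\<Sum>u\<in>{1, v, 1 / v}. u) = of_nat (card G) * \<mu>" using p[of 1] G(2) by simp
  have p2: "(\<Sum>u\<in>{1, v, 1 / v}. u^2) = of_nat (card G) * \<mu>^2" using p[of 2] G(2) by simp
  note moments = inverse_triple_moment_relation[OF v(1) \<mu> G(2) p1 p2]
  have "(\<Sum>u\<in>{1, v, 1 / v}. u^3) = of_nat (card G) * \<mu>^3" using p[of 3] moments(3) by simp
  then show False using inverse_triple_cubic_impossible[OF v(1) moments(1-3) p1] moments(4) by blast
qed

lemma set_quot_ne_affine_circle_subgroup_with_center: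
  assumes G: "finite_circle_subgroup G" "card G \<ge> 3"
    and \<xi>: "\<xi> \<noteq> 0" and \<mu>: "\<mu> \<noteq> 0" and A: "A \<subseteq> - {0}"
  shows "set_quot A \<noteq> (\<lambda>z. z + \<mu>) ` ((\<lambda>g. \<xi> * g) ` G \<union> {0}) - {0}"
proof
  assume "set_quot A = (\<lambda>z. z + \<mu>) ` ((\<lambda>g. \<xi> * g) ` G \<union> {0}) - {0}"
  then have U: "set_quot A = insert \<mu> ((\<lambda>g. \<xi> * g + \<mu>) ` G) - {0}"
    by (auto simp: image_image)
  have fin: "finite G" using G(1) by (simp add: finite_circle_subgroup_def)
  have inj: "inj_on (\<lambda>g. \<xi> * g + \<mu>) G" using \<xi> by (auto simp: inj_on_def)
  have notin: "\<mu> \<notin> (\<lambda>g. \<xi> * g + \<mu>) ` G" using \<xi> G(1) by (auto simp: finite_circle_subgroup_def)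
  interpret quotient_set_on_circle A \<mu> "cmod \<xi>"
    using A \<mu> G(1) by unfold_locales (auto simp: U finite_circle_subgroup_def norm_mult)
  have center: "\<mu> \<in> set_quot A" using U \<mu> by simp
  then have "A \<noteq> {}" by (auto simp: set_quot_def)
  then obtain v where v: "v \<noteq> 0" "set_quot A = {1, v, 1 / v}"
    using set_quot_subset_three set_quot_eq_inverse_triple[OF A] by meson
  have p: "(\<Sum>u\<in>{1, v, 1 / v}. u^j) = of_nat (card G + 1) * \<mu>^j" if "0 < j" "j < card G" for j
  proof -
    have "(\<Sum>u\<in>{1, v, 1 / v}. u^j) = (\<Sum>u\<in>insert \<mu> ((\<lambda>g. \<xi> * g + \<mu>) ` G). u^j)"
      unfolding v(2)[symmetric] U using fin that(1) by (intro sum.mono_neutral_left) auto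
    also have "\<dots> = \<mu>^j + (\<Sum>g\<in>G. (\<xi> * g + \<mu>)^j)" using fin notin inj by (simp add: sum.reindex)
    finally show ?thesis
      using sum_affine_power_finite_circle_subgroup[OF G(1) that(2), of \<xi> \<mu>] by (simp add: distrib_right)
  qed
  have m: "card G + 1 \<ge> 3" using G(2) by simp
  have p1: "(\<Sum>u\<in>{1, v, 1 / v}. u) = of_nat (card G + 1) * \<mu>" using p[of 1] G(2) by simp
  have p2: "(\<Sum>u\<in>{1, v, 1 / v}. u^2) = of_nat (card G + 1) * \<mu>^2" using p[of 2] G(2) by simp
  note moments = inverse_triple_moment_relation[OF v(1) \<mu> m p1 p2]
  show False using inverse_triple_center_impossible[OF v(1) moments(1,2) \<mu> moments(3) p1 moments(4)]
    center v(2) by simp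
qed

theorem theorem1p12:
  fixes G :: "complex set"
  assumes "finite_circle_subgroup G"
  shows "(\<forall>l\<in>G. \<not> (\<exists>A B. A \<subseteq> - {0} \<and> B \<subseteq> - {0} \<and> at_least_two A \<and> at_least_two B
              \<and> set_prod A B = (\<lambda>g. g - l) ` G - {0}))
     \<and> (card G \<ge> 3 \<longrightarrow> (\<forall>\<xi> \<mu> A. \<xi> \<noteq> 0 \<longrightarrow> \<mu> \<noteq> 0 \<longrightarrow> A \<subseteq> - {0} \<longrightarrow>
              set_quot A \<noteq> (\<lambda>g. \<xi> * g + \<mu>) ` G - {0}))
     \<and> (card G \<ge> 3 \<longrightarrow> (\<forall>\<xi> \<mu> A. \<xi> \<noteq> 0 \<longrightarrow> \<mu> \<noteq> 0 \<longrightarrow> A \<subseteq> - {0} \<longrightarrow>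
              set_quot A \<noteq> (\<lambda>z. z + \<mu>) ` ((\<lambda>g. \<xi> * g) ` G \<union> {0}) - {0}))"
proof (intro conjI ballI impI allI notI)
  fix l assume "l \<in> G"
  moreover have unit_circle: "G \<subseteq> sphere 0 1" using assms by (auto simp: finite_circle_subgroup_def)
  ultimately have l: "cmod l = 1" by auto
  assume "\<exists>A B. A \<subseteq> - {0} \<and> B \<subseteq> - {0} \<and> at_least_two A \<and> at_least_two B
      \<and> set_prod A B = (\<lambda>g. g - l) ` G - {0}"
  then show False using set_prod_ne_shifted_circle[OF unit_circle l] by blast
next
  fix \<xi> \<mu> A
  assume "card G \<ge> 3" "\<xi> \<noteq> 0" "\<mu> \<noteq> 0" "A \<subseteq> - {0}" "set_quot A = (\<lambda>g. \<xi> * g + \<mu>) ` G - {0}"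
  then show False using set_quot_ne_affine_circle_subgroup[OF assms] by blast
next
  fix \<xi> \<mu> A
  assume "card G \<ge> 3" "\<xi> \<noteq> 0" "\<mu> \<noteq> 0" "A \<subseteq> - {0}"
    "set_quot A = (\<lambda>z. z + \<mu>) ` ((\<lambda>g. \<xi> * g) ` G \<union> {0}) - {0}"
  then show False using set_quot_ne_affine_circle_subgroup_with_center[OF assms] by blast
qed

end
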